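(* Let $v$ and $\tilde v$ be quadratic vector fields on $\mathbb{C}^2$, each having exactly four singular points in $\mathbb{C}^2$, all of them non-degenerate. If $v$ and $\tilde v$ have the same spectra of singularities, then there is an affine map $T$ of $\mathbb{C}^2$ such that the transform $T_*\tilde v$ either equals $v$ or is a twin vector field of $v$. Moreover, there is a nonempty Zariski-open subset $U$ of the space $\mathcal{A}_2$ of quadratic vector fields such that every $v\in U$ has exactly one twin vector field.
   Context: A quadratic vector field on $\mathbb{C}^2$ is $v=P\,\partial_x+Q\,\partial_y$ with $P,Q\in\mathbb{C}[x,y]$ of degree at most $2$; $\mathcal{A}_2$ denotes the (12-dimensional) vector space of these. A singular point is a common zero $p$ of $P,Q$. It is non-degenerate if $\det Dv(p)\neq 0$, where $Dv(p)=\begin{pmatrix}P_x&P_y\\Q_x&Q_y\end{pmatrix}(p)$. The spectrum of $v$ at $p$ is the ordered pair $(\operatorname{tr}Dv(p),\det Dv(p))$. Two such vector fields have the same spectra of singularities if the multisets $\{(\operatorname{tr}Dv(p),\det Dv(p)) : p\in \mathrm{Sing}(v)\}$ coincide, where positions of the singular points are not taken into account. For an affine map $T$ of $\mathbb{C}^2$, $T_*v(x,y)=DT\cdot v(T^{-1}(x,y))$. Two vector fields are affine equivalent if one is $T_*$ of the other for some affine $T$. Two vector fields $v_1,v_2$ with isolated singularities are twin vector fields if $v_1\neq v_2$, they have exactly the same singular set, and for each common singular point $p$ the matrices $Dv_1(p)$ and $Dv_2(p)$ have the same trace and determinant. *)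

theory Defs
  imports "HOL-Analysis.Analysis" "HOL-Library.Multiset"
begin

text \<open>The space A_2 of quadratic vector fields v = P d/dx + Q d/dy on C^2 is identified
with C^12 via the coefficients:
  P(x,y) = v0 + v1 x + v2 y + v3 x^2 + v4 x y + v5 y^2,
  Q(x,y) = v6 + v7 x + v8 y + v9 x^2 + v10 x y + v11 y^2.\<close>

type_synonym qvf = "complex ^ 12"

definition Pv :: "qvf \<Rightarrow> complex \<Rightarrow> complex \<Rightarrow> complex" where
  "Pv v x y = v$0 + v$1 * x + v$2 * y + v$3 * x^2 + v$4 * x * y + v$5 * y^2"

definition Qv :: "qvf \<Rightarrow> complex \<Rightarrow> complex \<Rightarrow> complex" where
  "Qv v x y = v$6 + v$7 * x + v$8 * y + v$9 * x^2 + v$10 * x * y + v$11 * y^2"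

definition vf :: "qvf \<Rightarrow> complex \<times> complex \<Rightarrow> complex \<times> complex" where
  "vf v z = (Pv v (fst z) (snd z), Qv v (fst z) (snd z))"

definition Px :: "qvf \<Rightarrow> complex \<Rightarrow> complex \<Rightarrow> complex" where
  "Px v x y = v$1 + 2 * v$3 * x + v$4 * y"
definition Py :: "qvf \<Rightarrow> complex \<Rightarrow> complex \<Rightarrow> complex" where
  "Py v x y = v$2 + v$4 * x + 2 * v$5 * y"
definition Qx :: "qvf \<Rightarrow> complex \<Rightarrow> complex \<Rightarrow> complex" where
  "Qx v x y = v$7 + 2 * v$9 * x + v$10 * y"
definition Qy :: "qvf \<Rightarrow> complex \<Rightarrow> complex \<Rightarrow> complex" where
  "Qy v x y = v$8 + v$10 * x + 2 * v$11 * y"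

definition trD :: "qvf \<Rightarrow> complex \<times> complex \<Rightarrow> complex" where
  "trD v p = Px v (fst p) (snd p) + Qy v (fst p) (snd p)"

definition detD :: "qvf \<Rightarrow> complex \<times> complex \<Rightarrow> complex" where
  "detD v p = Px v (fst p) (snd p) * Qy v (fst p) (snd p) - Py v (fst p) (snd p) * Qx v (fst p) (snd p)"

definition Sing :: "qvf \<Rightarrow> (complex \<times> complex) set" where
  "Sing v = {p. Pv v (fst p) (snd p) = 0 \<and> Qv v (fst p) (snd p) = 0}"

definition nondegenerate_sing :: "qvf \<Rightarrow> complex \<times> complex \<Rightarrow> bool" where
  "nondegenerate_sing v p \<longleftrightarrow> p \<in> Sing v \<and> detD v p \<noteq> 0"

definition spectra :: "qvf \<Rightarrow> (complex \<times> complex) multiset" where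
  "spectra v = image_mset (\<lambda>p. (trD v p, detD v p)) (mset_set (Sing v))"

definition isolated_sings :: "qvf \<Rightarrow> bool" where
  "isolated_sings v \<longleftrightarrow> (\<forall>p\<in>Sing v. \<not> p islimpt Sing v)"

definition twin :: "qvf \<Rightarrow> qvf \<Rightarrow> bool" where
  "twin v1 v2 \<longleftrightarrow> isolated_sings v1 \<and> isolated_sings v2 \<and> v1 \<noteq> v2 \<and>
     Sing v1 = Sing v2 \<and>
     (\<forall>p\<in>Sing v1. trD v1 p = trD v2 p \<and> detD v1 p = detD v2 p)"

definition lin2 :: "complex \<Rightarrow> complex \<Rightarrow> complex \<Rightarrow> complex \<Rightarrow> complex \<times> complex \<Rightarrow> complex \<times> complex" where
  "lin2 a b c d z = (a * fst z + b * snd z, c * fst z + d * snd z)"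

definition aff2 :: "complex \<Rightarrow> complex \<Rightarrow> complex \<Rightarrow> complex \<Rightarrow> complex \<Rightarrow> complex \<Rightarrow> complex \<times> complex \<Rightarrow> complex \<times> complex" where
  "aff2 a b c d e f z = (a * fst z + b * snd z + e, c * fst z + d * snd z + f)"

definition pushfwd :: "complex \<Rightarrow> complex \<Rightarrow> complex \<Rightarrow> complex \<Rightarrow> complex \<Rightarrow> complex \<Rightarrow> qvf \<Rightarrow> complex \<times> complex \<Rightarrow> complex \<times> complex" where
  "pushfwd a b c d e f v z = lin2 a b c d (vf v (inv (aff2 a b c d e f) z))"

inductive_set poly_fun :: "(qvf \<Rightarrow> complex) set" where
  pf_const: "(\<lambda>_. c) \<in> poly_fun"
| pf_coord: "(\<lambda>v. v $ i) \<in> poly_fun"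
| pf_add: "f \<in> poly_fun \<Longrightarrow> g \<in> poly_fun \<Longrightarrow> (\<lambda>v. f v + g v) \<in> poly_fun"
| pf_mult: "f \<in> poly_fun \<Longrightarrow> g \<in> poly_fun \<Longrightarrow> (\<lambda>v. f v * g v) \<in> poly_fun"

definition zariski_open :: "qvf set \<Rightarrow> bool" where
  "zariski_open U \<longleftrightarrow> (\<exists>F \<subseteq> poly_fun. U = - {v. \<forall>f\<in>F. f v = 0})"

end

theory Submission
  imports Defs "HOL-Computational_Algebra.Fundamental_Theorem_Algebra"
begin

text \<open>The singular points \<open>p1, \<dots>, p4\<close> of a quadratic field with finitely many zeros are in general
  position, so both components of the field lie in the pencil of conics through them, spanned by the
  line pairs \<open>p1p2 \<cdot> p3p4\<close> and \<open>p1p3 \<cdot> p2p4\<close>. Hence \<open>det Dv(pi)\<close> is, up to sign and a factor independent of \<open>i\<close>, the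
  product of the areas of the three triangles of the configuration with vertex \<open>pi\<close>; so equal spectra
  force equal area ratios, and the affine map carrying three of the points onto their partners carries
  the fourth as well.
  Conversely a twin \<open>u\<close> of \<open>v\<close> lies in the same pencil, so \<open>(Pu, Qu) = M (Pv, Qv)\<close> for a constant
  matrix \<open>M\<close>. Equal traces at three of the points make \<open>M - I\<close> a multiple of a fixed cofactor vector,
  and \<open>det M = 1\<close> then leaves exactly one solution \<open>M \<noteq> I\<close>.\<close>

section \<open>Quadratic polynomials in two variables\<close>

type_synonym pt = "complex \<times> complex"

datatype quad = Quad (cst: complex) (cx: complex) (cy: complex) (cxx: complex) (cxy: complex) (cyy: complex)

definition qeval :: "quad \<Rightarrow> pt \<Rightarrow> complex" where
  "qeval c z = cst c + cx c * fst z + cy c * snd z + cxx c * (fst z)\<^sup>2 + cxy c * fst z * snd z + cyy c * (snd z)\<^sup>2"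

definition qdx :: "quad \<Rightarrow> pt \<Rightarrow> complex" where
  "qdx c z = cx c + 2 * cxx c * fst z + cxy c * snd z"

definition qdy :: "quad \<Rightarrow> pt \<Rightarrow> complex" where
  "qdy c z = cy c + cxy c * fst z + 2 * cyy c * snd z"

definition jac :: "quad \<Rightarrow> quad \<Rightarrow> pt \<Rightarrow> complex" where
  "jac c d z = qdx c z * qdy d z - qdy c z * qdx d z"

definition qcomb :: "complex \<Rightarrow> quad \<Rightarrow> complex \<Rightarrow> quad \<Rightarrow> quad" where
  "qcomb a c b d = Quad (a * cst c + b * cst d) (a * cx c + b * cx d) (a * cy c + b * cy d)
     (a * cxx c + b * cxx d) (a * cxy c + b * cxy d) (a * cyy c + b * cyy d)"

lemma qeval_qcomb [simp]: "qeval (qcomb a c b d) z = a * qeval c z + b * qeval d z"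
  and qdx_qcomb [simp]: "qdx (qcomb a c b d) z = a * qdx c z + b * qdx d z"
  and qdy_qcomb [simp]: "qdy (qcomb a c b d) z = a * qdy c z + b * qdy d z"
  by (simp_all add: qcomb_def qeval_def qdx_def qdy_def algebra_simps)

lemma jac_qcomb: "jac (qcomb a e b f) (qcomb a' e b' f) z = (a * b' - b * a') * jac e f z"
  by (simp add: jac_def algebra_simps)

lemma qeval_eqI:
  assumes "\<And>z. qeval c z = qeval d z"
  shows "c = d"
proof -
  note e = assms[unfolded qeval_def]
  have 0: "cst c = cst d" using e[of "(0, 0)"] by simp
  have "cx c = cx d \<and> cxx c = cxx d"
    using e[of "(1, 0)"] e[of "(-1, 0)"] 0 by simp algebra
  moreover have "cy c = cy d \<and> cyy c = cyy d"
    using e[of "(0, 1)"] e[of "(0, -1)"] 0 by simp algebra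
  moreover have "cxy c = cxy d" using e[of "(1, 1)"] 0 calculation by simp
  ultimately show ?thesis using 0 by (simp add: quad.expand)
qed

text \<open>The coefficients of \<open>q \<circ> aff2 a b c d e f\<close>: its Taylor expansion at the origin, where the
  first-order part is the gradient of \<open>q\<close> at \<open>(e, f)\<close> transformed by the linear part.\<close>

definition qcomp :: "quad \<Rightarrow> complex \<Rightarrow> complex \<Rightarrow> complex \<Rightarrow> complex \<Rightarrow> complex \<Rightarrow> complex \<Rightarrow> quad" where
  "qcomp q a b c d e f =
     Quad (qeval q (e, f)) (a * qdx q (e, f) + c * qdy q (e, f)) (b * qdx q (e, f) + d * qdy q (e, f))
       (cxx q * a\<^sup>2 + cxy q * a * c + cyy q * c\<^sup>2)
       (2 * cxx q * a * b + cxy q * (a * d + b * c) + 2 * cyy q * c * d)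
       (cxx q * b\<^sup>2 + cxy q * b * d + cyy q * d\<^sup>2)"

lemma qeval_qcomp: "qeval (qcomp q a b c d e f) z = qeval q (aff2 a b c d e f z)"
  and qdx_qcomp: "qdx (qcomp q a b c d e f) z =
     a * qdx q (aff2 a b c d e f z) + c * qdy q (aff2 a b c d e f z)"
  and qdy_qcomp: "qdy (qcomp q a b c d e f) z =
     b * qdx q (aff2 a b c d e f z) + d * qdy q (aff2 a b c d e f z)"
  by (simp_all add: qcomp_def qeval_def qdx_def qdy_def aff2_def algebra_simps power2_eq_square)

lemma quadratic_three_roots:
  fixes a b c :: complex
  assumes "distinct [s, t, u]" "a + b * s + c * s\<^sup>2 = 0" "a + b * t + c * t\<^sup>2 = 0" "a + b * u + c * u\<^sup>2 = 0"
  shows "a = 0 \<and> b = 0 \<and> c = 0"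
proof -
  have "c * (s - t) * (s - u) * (t - u) = 0" "b * (s - t) * (s - u) * (t - u) = 0"
    "a * (s - t) * (s - u) * (t - u) = 0"
    using assms(2-4) by algebra+
  then show ?thesis using assms(1) by simp
qed

section \<open>Four points in general position\<close>

text \<open>Twice the signed area of the triangle \<open>pqr\<close>.\<close>

definition area :: "pt \<Rightarrow> pt \<Rightarrow> pt \<Rightarrow> complex" where
  "area p q r = (fst q - fst p) * (snd r - snd p) - (snd q - snd p) * (fst r - fst p)"

lemma area_degenerate [simp]: "area p p q = 0" "area p q p = 0" "area p q q = 0"
  by (simp_all add: area_def)

lemma area_aff2:
  "area (aff2 a b c d e f x) (aff2 a b c d e f y) (aff2 a b c d e f z) = (a * d - b * c) * area x y z"
  by (simp add: area_def aff2_def algebra_simps)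

definition chart :: "pt \<Rightarrow> pt \<Rightarrow> pt \<Rightarrow> pt \<Rightarrow> pt" where
  "chart p1 p2 p3 = aff2 (fst p2 - fst p1) (fst p3 - fst p1) (snd p2 - snd p1) (snd p3 - snd p1) (fst p1) (snd p1)"

lemma chart_vertices [simp]: "chart p1 p2 p3 (0, 0) = p1" "chart p1 p2 p3 (1, 0) = p2" "chart p1 p2 p3 (0, 1) = p3"
  by (simp_all add: chart_def aff2_def)

lemma chart_coords:
  assumes "area p1 p2 p3 \<noteq> 0"
  shows "chart p1 p2 p3 (area p1 z p3 / area p1 p2 p3, area p1 p2 z / area p1 p2 p3) = z"
proof -
  have "(fst p2 - fst p1) * area p1 z p3 + (fst p3 - fst p1) * area p1 p2 z = area p1 p2 p3 * (fst z - fst p1)"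
    "(snd p2 - snd p1) * area p1 z p3 + (snd p3 - snd p1) * area p1 p2 z = area p1 p2 p3 * (snd z - snd p1)"
    by (simp_all add: area_def algebra_simps)
  then have "(fst p2 - fst p1) * (area p1 z p3 / area p1 p2 p3) + (fst p3 - fst p1) * (area p1 p2 z / area p1 p2 p3) = fst z - fst p1"
    "(snd p2 - snd p1) * (area p1 z p3 / area p1 p2 p3) + (snd p3 - snd p1) * (area p1 p2 z / area p1 p2 p3) = snd z - snd p1"
    using assms by (simp_all add: add_divide_distrib [symmetric])
  then show ?thesis by (simp add: chart_def aff2_def prod_eq_iff)
qed

lemma area_cancel:
  assumes "area p1 p2 p3 \<noteq> 0" "area p1 x p3 = area p1 y p3" "area p1 p2 x = area p1 p2 y"
  shows "x = y"
  by (metis chart_coords[OF assms(1), of x] chart_coords[OF assms(1), of y] assms(2,3))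

lemma qeval_zero_if_zero_at_axis_points:
  assumes "s \<noteq> 0" "t \<noteq> 0"
    and "qeval h (0, 0) = 0" "qeval h (1, 0) = 0" "qeval h (2, 0) = 0"
    and "qeval h (0, 1) = 0" "qeval h (0, 2) = 0" "qeval h (s, t) = 0"
  shows "qeval h z = 0"
proof -
  have "cst h = 0" using assms(3) by (simp add: qeval_def)
  then have "cx h + cxx h = 0" "cx h * 2 + cxx h * 4 = 0" "cy h + cyy h = 0" "cy h * 2 + cyy h * 4 = 0"
    using assms(4-7) by (simp_all add: qeval_def power2_eq_square)
  then have "cx h = 0" "cxx h = 0" "cy h = 0" "cyy h = 0" by algebra+
  moreover have "cxy h = 0" using assms(1,2,8) \<open>cst h = 0\<close> calculation by (simp add: qeval_def)
  ultimately show ?thesis using \<open>cst h = 0\<close> by (simp add: qeval_def)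
qed

lemma qeval_zero_if_zero_at_six_points:
  assumes "area p1 p2 p3 \<noteq> 0" "area p1 p3 p4 \<noteq> 0" "area p1 p2 p4 \<noteq> 0"
    and "qeval H p1 = 0" "qeval H p2 = 0" "qeval H p3 = 0" "qeval H p4 = 0"
    and "qeval H (chart p1 p2 p3 (2, 0)) = 0" "qeval H (chart p1 p2 p3 (0, 2)) = 0"
  shows "qeval H z = 0"
proof -
  define E where "E = area p1 p2 p3"
  define h where "h = qcomp H (fst p2 - fst p1) (fst p3 - fst p1) (snd p2 - snd p1) (snd p3 - snd p1) (fst p1) (snd p1)"
  have h: "qeval h w = qeval H (chart p1 p2 p3 w)" for w
    by (simp add: h_def chart_def qeval_qcomp)
  have p4: "chart p1 p2 p3 (area p1 p4 p3 / E, area p1 p2 p4 / E) = p4"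
    unfolding E_def by (rule chart_coords[OF assms(1)])
  have "area p1 p4 p3 \<noteq> 0" using assms(2) by (simp add: area_def algebra_simps)
  have "qeval h w = 0" for w
  proof (rule qeval_zero_if_zero_at_axis_points)
    show "area p1 p4 p3 / E \<noteq> 0" "area p1 p2 p4 / E \<noteq> 0"
      using \<open>area p1 p4 p3 \<noteq> 0\<close> assms(1,3) by (simp_all add: E_def)
    show "qeval h (area p1 p4 p3 / E, area p1 p2 p4 / E) = 0"
      by (simp only: h p4 assms(7))
  qed (simp_all only: h chart_vertices assms(4-6,8,9))
  then show ?thesis using h chart_coords[OF assms(1), of z] by metis
qed

type_synonym lin = "complex \<times> complex \<times> complex"

fun lev :: "lin \<Rightarrow> pt \<Rightarrow> complex" where
  "lev (a0, a1, a2) z = a0 + a1 * fst z + a2 * snd z"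

lemma lev_zero_if_vanishes_at_triangle:
  assumes "area p1 p2 p3 \<noteq> 0" "lev a p1 = 0" "lev a p2 = 0" "lev a p3 = 0"
  shows "a = (0, 0, 0)"
proof (cases a)
  case (fields a0 a1 a2)
  have "area p1 p2 p3 * a1 = 0" "area p1 p2 p3 * a2 = 0"
    using assms(2-4) unfolding fields area_def by (simp_all, algebra+)
  then show ?thesis using assms fields by simp
qed

fun lin_prod :: "lin \<Rightarrow> lin \<Rightarrow> quad" where
  "lin_prod (a0, a1, a2) (b0, b1, b2) =
     Quad (a0 * b0) (a0 * b1 + a1 * b0) (a0 * b2 + a2 * b0) (a1 * b1) (a1 * b2 + a2 * b1) (a2 * b2)"

definition line_form :: "pt \<Rightarrow> pt \<Rightarrow> lin" where
  "line_form p q = ((snd q - snd p) * fst p - (fst q - fst p) * snd p, snd p - snd q, fst q - fst p)"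

definition line_pair :: "pt \<Rightarrow> pt \<Rightarrow> pt \<Rightarrow> pt \<Rightarrow> quad" where
  "line_pair p q r s = lin_prod (line_form p q) (line_form r s)"

lemma qeval_line_pair: "qeval (line_pair p q r s) z = area p q z * area r s z"
  and qdx_line_pair: "qdx (line_pair p q r s) z = (snd p - snd q) * area r s z + (snd r - snd s) * area p q z"
  and qdy_line_pair: "qdy (line_pair p q r s) z = (fst q - fst p) * area r s z + (fst s - fst r) * area p q z"
  by (simp_all add: line_pair_def line_form_def qeval_def qdx_def qdy_def area_def algebra_simps power2_eq_square)

definition general_position :: "pt \<Rightarrow> pt \<Rightarrow> pt \<Rightarrow> pt \<Rightarrow> bool" where
  "general_position p1 p2 p3 p4 \<longleftrightarrow>
     area p1 p2 p3 \<noteq> 0 \<and> area p1 p2 p4 \<noteq> 0 \<and> area p1 p3 p4 \<noteq> 0 \<and> area p2 p3 p4 \<noteq> 0"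

text \<open>The quadratics through four points in general position form the pencil spanned by two
  pairs of lines; the coefficients are read off at two auxiliary points, each lying on a line
  of one pair but on neither line of the other.\<close>

lemma quad_in_pencil:
  assumes g: "general_position p1 p2 p3 p4"
    and c: "qeval c p1 = 0" "qeval c p2 = 0" "qeval c p3 = 0" "qeval c p4 = 0"
  shows "\<exists>a b. c = qcomb a (line_pair p1 p2 p3 p4) b (line_pair p1 p3 p2 p4)"
proof -
  define C1 C2 where "C1 = line_pair p1 p2 p3 p4" and "C2 = line_pair p1 p3 p2 p4"
  define q r where "q = chart p1 p2 p3 (0, 2)" and "r = chart p1 p2 p3 (2, 0)"
  have "area p1 p2 q = 2 * area p1 p2 p3" "area p3 p4 q = - area p1 p3 p4" "area p1 p3 q = 0"
    "area p1 p3 r = - 2 * area p1 p2 p3" "area p2 p4 r = - area p1 p2 p4" "area p1 p2 r = 0"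
    by (simp_all add: q_def r_def chart_def aff2_def area_def algebra_simps)
  then have C: "qeval C1 q \<noteq> 0" "qeval C2 q = 0" "qeval C2 r \<noteq> 0" "qeval C1 r = 0"
    using g by (simp_all add: C1_def C2_def qeval_line_pair general_position_def)
  define a b where "a = qeval c q / qeval C1 q" and "b = qeval c r / qeval C2 r"
  define D where "D = qcomb a C1 b C2"
  define H where "H = qcomb 1 c (-1) D"
  have "qeval H z = 0" for z
  proof (rule qeval_zero_if_zero_at_six_points[of p1 p2 p3 p4])
    show "area p1 p2 p3 \<noteq> 0" "area p1 p3 p4 \<noteq> 0" "area p1 p2 p4 \<noteq> 0"
      using g by (simp_all add: general_position_def)
    show "qeval H p1 = 0" "qeval H p2 = 0" "qeval H p3 = 0" "qeval H p4 = 0"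
      using c by (simp_all add: H_def D_def C1_def C2_def qeval_line_pair)
    show "qeval H (chart p1 p2 p3 (2, 0)) = 0" "qeval H (chart p1 p2 p3 (0, 2)) = 0"
      using C by (simp_all add: H_def D_def a_def b_def flip: q_def r_def)
  qed
  then have "c = D"
    by (intro qeval_eqI) (simp add: H_def)
  then show ?thesis unfolding D_def C1_def C2_def by blast
qed

lemma jac_line_pairs:
  "jac (line_pair p1 p2 p3 p4) (line_pair p1 p3 p2 p4) p1 = area p1 p3 p4 * area p1 p2 p4 * area p1 p2 p3"
  "jac (line_pair p1 p2 p3 p4) (line_pair p1 p3 p2 p4) p2 = - area p2 p3 p4 * area p1 p2 p4 * area p1 p2 p3"
  "jac (line_pair p1 p2 p3 p4) (line_pair p1 p3 p2 p4) p3 = area p2 p3 p4 * area p1 p3 p4 * area p1 p2 p3"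
  "jac (line_pair p1 p2 p3 p4) (line_pair p1 p3 p2 p4) p4 = - area p2 p3 p4 * area p1 p3 p4 * area p1 p2 p4"
  by (simp_all add: jac_def qdx_line_pair qdy_line_pair) (simp_all add: area_def algebra_simps)

section \<open>Quadratic vector fields and their singular points\<close>

definition Pquad :: "qvf \<Rightarrow> quad" where
  "Pquad v = Quad (v$0) (v$1) (v$2) (v$3) (v$4) (v$5)"

definition Qquad :: "qvf \<Rightarrow> quad" where
  "Qquad v = Quad (v$6) (v$7) (v$8) (v$9) (v$10) (v$11)"

lemma vf_quads: "vf v z = (qeval (Pquad v) z, qeval (Qquad v) z)"
  by (simp add: vf_def Pv_def Qv_def Pquad_def Qquad_def qeval_def)

lemma Sing_quads: "z \<in> Sing v \<longleftrightarrow> qeval (Pquad v) z = 0 \<and> qeval (Qquad v) z = 0"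
  by (simp add: Sing_def Pv_def Qv_def Pquad_def Qquad_def qeval_def)

lemma trD_quads: "trD v z = qdx (Pquad v) z + qdy (Qquad v) z"
  by (simp add: trD_def Px_def Qy_def Pquad_def Qquad_def qdx_def qdy_def)

lemma detD_quads: "detD v z = jac (Pquad v) (Qquad v) z"
  by (simp add: detD_def Px_def Py_def Qx_def Qy_def Pquad_def Qquad_def jac_def qdx_def qdy_def)

lemma qvf_index_cases:
  fixes i :: 12
  shows "i \<in> {0, 1, 2, 3, 4, 5, 6, 7, 8, 9, 10, 11}"
proof (induct i)
  case (of_int z)
  then have "z = 0 \<or> z = 1 \<or> z = 2 \<or> z = 3 \<or> z = 4 \<or> z = 5 \<or> z = 6 \<or> z = 7 \<or> z = 8 \<or> z = 9 \<or> z = 10 \<or> z = 11"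
    by simp presburger
  then show ?case by auto
qed

lemma qvf_eqI:
  assumes "Pquad u = Pquad v" "Qquad u = Qquad v"
  shows "u = v"
proof -
  have "u $ i = v $ i" for i
    using qvf_index_cases[of i] assms by (auto simp: Pquad_def Qquad_def)
  then show ?thesis by (simp add: vec_eq_iff)
qed

definition mk_qvf :: "quad \<Rightarrow> quad \<Rightarrow> qvf" where
  "mk_qvf P Q = (\<chi> i. if i = 0 then cst P else if i = 1 then cx P else if i = 2 then cy P
     else if i = 3 then cxx P else if i = 4 then cxy P else if i = 5 then cyy P
     else if i = 6 then cst Q else if i = 7 then cx Q else if i = 8 then cy Q
     else if i = 9 then cxx Q else if i = 10 then cxy Q else cyy Q)"

lemma quads_mk_qvf [simp]: "Pquad (mk_qvf P Q) = P" "Qquad (mk_qvf P Q) = Q"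
proof -
  have "distinct [0::12, 1, 2, 3, 4, 5, 6, 7, 8, 9, 10, 11]" by simp
  then show "Pquad (mk_qvf P Q) = P" "Qquad (mk_qvf P Q) = Q"
    by (simp_all add: Pquad_def Qquad_def mk_qvf_def quad.expand)
qed

definition line_through :: "pt \<Rightarrow> pt \<Rightarrow> complex \<Rightarrow> pt" where
  "line_through p q t = (fst p + t * (fst q - fst p), snd p + t * (snd q - snd p))"

lemma collinear_on_line:
  assumes "p \<noteq> q" "area p q r = 0"
  obtains t where "r = line_through p q t"
proof (cases "fst q = fst p")
  case True
  with assms have "snd q - snd p \<noteq> 0" "fst r = fst p" by (auto simp: area_def prod_eq_iff)
  with True show ?thesis
    by (intro that[of "(snd r - snd p) / (snd q - snd p)"]) (simp add: line_through_def prod_eq_iff)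
next
  case False
  with assms have "snd r = snd p + (fst r - fst p) / (fst q - fst p) * (snd q - snd p)"
    by (simp add: area_def field_simps)
  with False show ?thesis
    by (intro that[of "(fst r - fst p) / (fst q - fst p)"]) (simp add: line_through_def prod_eq_iff)
qed

lemma infinite_line:
  assumes "p \<noteq> q"
  shows "infinite (range (line_through p q))"
proof -
  have "inj (line_through p q)" using assms by (auto simp: inj_def line_through_def prod_eq_iff)
  then show ?thesis using finite_imageD infinite_UNIV_char_0 by blast
qed

lemma quad_vanishes_on_line:
  assumes "distinct [p, q, r]" "area p q r = 0" "qeval c p = 0" "qeval c q = 0" "qeval c r = 0"
  shows "qeval c (line_through p q t) = 0"
proof -
  have "p \<noteq> q" using assms(1) by simp
  then obtain t0 where r: "r = line_through p q t0" using collinear_on_line assms(2) by blast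
  define h where "h = qcomp c (fst q - fst p) 0 (snd q - snd p) 0 (fst p) (snd p)"
  have restrict: "qeval c (line_through p q s) = cst h + cx h * s + cxx h * s\<^sup>2" for s
    using qeval_qcomp[of c "fst q - fst p" 0 "snd q - snd p" 0 "fst p" "snd p" "(s, 0)"]
    by (simp add: h_def [symmetric] qeval_def aff2_def line_through_def algebra_simps)
  have "distinct [0, 1, t0]"
    using assms(1) by (auto simp: r line_through_def prod_eq_iff)
  moreover have "qeval c (line_through p q 0) = 0" "qeval c (line_through p q 1) = 0"
    "qeval c (line_through p q t0) = 0"
    using assms(3-5) r by (simp_all add: line_through_def)
  ultimately have "cst h = 0 \<and> cx h = 0 \<and> cxx h = 0"
    by (intro quadratic_three_roots[of 0 1 t0]) (simp_all only: restrict)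
  then show ?thesis by (simp add: restrict)
qed

lemma finite_Sing_not_collinear:
  assumes "finite (Sing v)" "distinct [p, q, r]" "{p, q, r} \<subseteq> Sing v"
  shows "area p q r \<noteq> 0"
proof
  assume "area p q r = 0"
  then have "range (line_through p q) \<subseteq> Sing v"
    using assms(2,3) quad_vanishes_on_line[of p q r] by (auto simp: Sing_quads)
  with assms(1,2) show False
    using infinite_line[of p q] finite_subset by auto
qed

lemma finite_Sing_general_position:
  assumes "finite (Sing v)" "distinct [p1, p2, p3, p4]" "{p1, p2, p3, p4} \<subseteq> Sing v"
  shows "general_position p1 p2 p3 p4"
  using assms finite_Sing_not_collinear[OF assms(1)] unfolding general_position_def
  by (metis (no_types, lifting) distinct_length_2_or_more distinct_singleton insert_subset)

lemma field_in_pencil: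
  assumes "general_position p1 p2 p3 p4" "{p1, p2, p3, p4} \<subseteq> Sing v"
  obtains a b a' b' where
    "Pquad v = qcomb a (line_pair p1 p2 p3 p4) b (line_pair p1 p3 p2 p4)"
    "Qquad v = qcomb a' (line_pair p1 p2 p3 p4) b' (line_pair p1 p3 p2 p4)"
  using quad_in_pencil[OF assms(1)] assms(2) by (metis Sing_quads insert_subset)

lemma detD_area_relations:
  assumes "general_position p1 p2 p3 p4" "{p1, p2, p3, p4} \<subseteq> Sing v"
  shows "area p1 p3 p4 * detD v p2 = area p1 p2 p3 * detD v p4"
    and "area p1 p2 p4 * detD v p3 = - area p1 p2 p3 * detD v p4"
proof -
  obtain a b a' b' where
    "Pquad v = qcomb a (line_pair p1 p2 p3 p4) b (line_pair p1 p3 p2 p4)"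
    "Qquad v = qcomb a' (line_pair p1 p2 p3 p4) b' (line_pair p1 p3 p2 p4)"
    using field_in_pencil[OF assms] .
  then have dz: "detD v z = (a * b' - b * a') * jac (line_pair p1 p2 p3 p4) (line_pair p1 p3 p2 p4) z" for z
    by (simp add: detD_quads jac_qcomb)
  show "area p1 p3 p4 * detD v p2 = area p1 p2 p3 * detD v p4"
    and "area p1 p2 p4 * detD v p3 = - area p1 p2 p3 * detD v p4"
    unfolding dz jac_line_pairs by (simp_all add: algebra_simps)
qed

section \<open>Affine maps and push-forward\<close>

lemma aff2_comp:
  "aff2 a b c d e f (aff2 a' b' c' d' e' f' z) =
     aff2 (a * a' + b * c') (a * b' + b * d') (c * a' + d * c') (c * b' + d * d')
       (a * e' + b * f' + e) (c * e' + d * f' + f) z"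
  by (simp add: aff2_def algebra_simps)

lemma aff2_inverse:
  assumes "a * d - b * c \<noteq> 0"
  defines "D \<equiv> a * d - b * c"
  shows "inv (aff2 a b c d e f) = aff2 (d / D) (- b / D) (- c / D) (a / D) ((b * f - d * e) / D) ((c * e - a * f) / D)"
    and "bij (aff2 a b c d e f)"
proof -
  let ?S = "aff2 (d / D) (- b / D) (- c / D) (a / D) ((b * f - d * e) / D) ((c * e - a * f) / D)"
  have D: "D \<noteq> 0" using assms(1) by (simp add: D_def)
  have ST: "?S (aff2 a b c d e f z) = z" and TS: "aff2 a b c d e f (?S z) = z" for z
    using D by (simp_all add: aff2_def prod_eq_iff field_simps) (simp_all add: D_def algebra_simps)
  show "inv (aff2 a b c d e f) = ?S" by (rule inv_equality) (use ST TS in auto)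
  show "bij (aff2 a b c d e f)" by (rule o_bij[of ?S]) (use ST TS in auto)
qed

lemma aff2_through_three_points:
  assumes "area q1 q2 q3 \<noteq> 0"
  obtains a b c d e f where
    "aff2 a b c d e f q1 = p1" "aff2 a b c d e f q2 = p2" "aff2 a b c d e f q3 = p3"
proof -
  define E where "E = area q1 q2 q3"
  have coords: "(area q1 z q3 / E, area q1 q2 z / E) =
    aff2 ((snd q3 - snd q1) / E) (- (fst q3 - fst q1) / E) (- (snd q2 - snd q1) / E) ((fst q2 - fst q1) / E)
      (area q1 (0, 0) q3 / E) (area q1 q2 (0, 0) / E) z" for z
    by (simp add: aff2_def area_def add_divide_distrib diff_divide_distrib algebra_simps)
  have "\<exists>a b c d e f. \<forall>z. chart p1 p2 p3 (area q1 z q3 / E, area q1 q2 z / E) = aff2 a b c d e f z"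
    unfolding coords chart_def aff2_comp by blast
  then obtain a b c d e f where T: "\<And>z. chart p1 p2 p3 (area q1 z q3 / E, area q1 q2 z / E) = aff2 a b c d e f z"
    by blast
  show ?thesis
    by (rule that[of a b c d e f]) (use assms in \<open>simp_all flip: T add: E_def\<close>)
qed

definition mix_field :: "complex \<Rightarrow> complex \<Rightarrow> complex \<Rightarrow> complex \<Rightarrow> qvf \<Rightarrow> qvf" where
  "mix_field m11 m12 m21 m22 v =
     mk_qvf (qcomb m11 (Pquad v) m12 (Qquad v)) (qcomb m21 (Pquad v) m22 (Qquad v))"

lemma vf_mix_field: "vf (mix_field m11 m12 m21 m22 v) z = lin2 m11 m12 m21 m22 (vf v z)"
  by (simp add: mix_field_def vf_quads lin2_def)

lemma trD_mix_field:
  "trD (mix_field m11 m12 m21 m22 v) z =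
     m11 * qdx (Pquad v) z + m12 * qdx (Qquad v) z + m21 * qdy (Pquad v) z + m22 * qdy (Qquad v) z"
  by (simp add: mix_field_def trD_quads)

lemma detD_mix_field: "detD (mix_field m11 m12 m21 m22 v) z = (m11 * m22 - m12 * m21) * detD v z"
  by (simp add: mix_field_def detD_quads jac_qcomb)

lemma Sing_mix_field:
  assumes "m11 * m22 - m12 * m21 \<noteq> 0"
  shows "Sing (mix_field m11 m12 m21 m22 v) = Sing v"
proof -
  have "m11 * X + m12 * Y = 0 \<and> m21 * X + m22 * Y = 0 \<longleftrightarrow> X = 0 \<and> Y = 0" for X Y :: complex
  proof
    assume "m11 * X + m12 * Y = 0 \<and> m21 * X + m22 * Y = 0"
    then have "(m11 * m22 - m12 * m21) * X = 0" "(m11 * m22 - m12 * m21) * Y = 0" by algebra+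
    with assms show "X = 0 \<and> Y = 0" by simp
  qed simp
  then show ?thesis by (auto simp: Sing_quads mix_field_def)
qed

definition compose_field :: "complex \<Rightarrow> complex \<Rightarrow> complex \<Rightarrow> complex \<Rightarrow> complex \<Rightarrow> complex \<Rightarrow> qvf \<Rightarrow> qvf" where
  "compose_field a b c d e f w = mk_qvf (qcomp (Pquad w) a b c d e f) (qcomp (Qquad w) a b c d e f)"

lemma vf_compose_field: "vf (compose_field a b c d e f w) z = vf w (aff2 a b c d e f z)"
  by (simp add: compose_field_def vf_quads qeval_qcomp)

lemma Sing_compose_field: "z \<in> Sing (compose_field a b c d e f w) \<longleftrightarrow> aff2 a b c d e f z \<in> Sing w"
  by (simp add: compose_field_def Sing_quads qeval_qcomp)

lemma detD_compose_field:
  "detD (compose_field a b c d e f w) z = (a * d - b * c) * detD w (aff2 a b c d e f z)"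
  by (simp add: compose_field_def detD_quads jac_def qdx_qcomp qdy_qcomp algebra_simps)

lemma spectrum_mix_compose_field:
  assumes "a' * a + b' * c = 1" "a' * b + b' * d = 0" "c' * a + d' * c = 0" "c' * b + d' * d = 1"
  shows "trD (mix_field a b c d (compose_field a' b' c' d' e' f' w)) z = trD w (aff2 a' b' c' d' e' f' z)"
    and "detD (mix_field a b c d (compose_field a' b' c' d' e' f' w)) z = detD w (aff2 a' b' c' d' e' f' z)"
proof -
  let ?z = "aff2 a' b' c' d' e' f' z"
  have "trD (mix_field a b c d (compose_field a' b' c' d' e' f' w)) z =
      (a' * a + b' * c) * qdx (Pquad w) ?z + (c' * a + d' * c) * qdy (Pquad w) ?z
      + (a' * b + b' * d) * qdx (Qquad w) ?z + (c' * b + d' * d) * qdy (Qquad w) ?z"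
    by (simp add: trD_mix_field compose_field_def qdx_qcomp qdy_qcomp algebra_simps)
  then show "trD (mix_field a b c d (compose_field a' b' c' d' e' f' w)) z = trD w ?z"
    using assms by (simp add: trD_quads)
  have "(a * d - b * c) * (a' * d' - b' * c') = 1" using assms by algebra
  then show "detD (mix_field a b c d (compose_field a' b' c' d' e' f' w)) z = detD w ?z"
    by (simp add: detD_mix_field detD_compose_field)
qed

text \<open>The push-forward by \<open>T\<close> is \<open>w \<circ> T\<^sup>-\<^sup>1\<close> mixed by the linear part of \<open>T\<close>; its Jacobian at \<open>T z\<close> is
  \<open>DT \<cdot> Dw(z) \<cdot> DT\<^sup>-\<^sup>1\<close>, with the trace and determinant of \<open>Dw(z)\<close>.\<close>

lemma pushfwd_field:
  assumes "a * d - b * c \<noteq> 0"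
  obtains u where "vf u = pushfwd a b c d e f w" "Sing u = aff2 a b c d e f ` Sing w"
    "\<And>z. trD u (aff2 a b c d e f z) = trD w z" "\<And>z. detD u (aff2 a b c d e f z) = detD w z"
proof -
  define D where "D = a * d - b * c"
  have D: "D \<noteq> 0" using assms by (simp add: D_def)
  define a' b' c' d' e' f' where "a' = d / D" "b' = - b / D" "c' = - c / D" "d' = a / D"
    "e' = (b * f - d * e) / D" "f' = (c * e - a * f) / D"
  let ?T = "aff2 a b c d e f" and ?S = "aff2 a' b' c' d' e' f'"
  have S: "inv ?T = ?S" "bij ?T"
    using aff2_inverse[OF assms] by (simp_all add: a'_b'_c'_d'_e'_f'_def D_def)
  then have ST: "?S (?T z) = z" for z by (metis bij_inv_eq_iff)
  define u where "u = mix_field a b c d (compose_field a' b' c' d' e' f' w)"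
  have "vf u = pushfwd a b c d e f w"
    by (rule ext) (simp add: u_def pushfwd_def vf_mix_field vf_compose_field S(1))
  moreover have "Sing u = ?T ` Sing w"
  proof -
    have "Sing u = {z. ?S z \<in> Sing w}"
      using assms by (auto simp: u_def Sing_mix_field Sing_compose_field)
    also have "\<dots> = ?T ` Sing w"
      using ST S by (auto simp: image_iff) (metis bij_inv_eq_iff)
    finally show ?thesis .
  qed
  moreover have "a' * a + b' * c = 1" "a' * b + b' * d = 0" "c' * a + d' * c = 0" "c' * b + d' * d = 1"
    using D by (simp_all add: a'_b'_c'_d'_e'_f'_def field_simps) (simp_all add: D_def algebra_simps)
  then have "trD u (?T z) = trD w z" "detD u (?T z) = detD w z" for z
    using spectrum_mix_compose_field[of a' a b' c b d c' d' e' f' w "?T z"] by (simp_all add: u_def ST)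
  ultimately show ?thesis using that by blast
qed

section \<open>Fields with equal spectra\<close>

lemma image_mset_eq_obtain_bij:
  assumes "finite A" "finite B" "image_mset f (mset_set A) = image_mset g (mset_set B)"
  obtains h where "bij_betw h A B" "\<And>a. a \<in> A \<Longrightarrow> g (h a) = f a"
proof -
  have "\<exists>h. bij_betw h A B \<and> (\<forall>a\<in>A. g (h a) = f a)"
    using assms
  proof (induction A arbitrary: B rule: finite_induct)
    case empty
    then have "B = {}" by (simp add: mset_set_empty_iff)
    then show ?case by (auto simp: bij_betw_def)
  next
    case (insert a A)
    then have "f a \<in># image_mset g (mset_set B)"
      by (metis image_mset_add_mset mset_set.insert union_single_eq_member)
    then obtain b where b: "b \<in> B" "g b = f a" using insert.prems(1) by auto
    with insert.prems have "image_mset f (mset_set A) = image_mset g (mset_set (B - {b}))"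
      using insert.hyps by (simp add: mset_set.remove)
    then obtain h where h: "bij_betw h A (B - {b})" "\<forall>x\<in>A. g (h x) = f x"
      using insert.IH[of "B - {b}"] insert.prems(1) by auto
    have "bij_betw (h(a := b)) A (B - {b}) \<longleftrightarrow> bij_betw h A (B - {b})"
      by (rule bij_betw_cong) (use insert.hyps(2) in auto)
    with h(1) have "bij_betw (h(a := b)) A (B - {b})" by simp
    then have "bij_betw (h(a := b)) (A \<union> {a}) ((B - {b}) \<union> {b})"
      using notIn_Un_bij_betw[of a A "h(a := b)" "B - {b}"] insert.hyps(2) by simp
    then have "bij_betw (h(a := b)) (insert a A) B" using b(1) by (simp add: insert_absorb)
    moreover have "\<forall>x\<in>insert a A. g ((h(a := b)) x) = f x" using h(2) b(2) insert.hyps(2) by auto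
    ultimately show ?case by blast
  qed
  then show ?thesis using that by blast
qed

lemma card_eq_4_obtain:
  assumes "card S = 4"
  obtains p1 p2 p3 p4 where "S = {p1, p2, p3, p4}" "distinct [p1, p2, p3, p4]"
proof -
  have "card S = Suc (Suc (Suc (Suc 0)))" using assms by simp
  then show ?thesis using that unfolding card_Suc_eq by fastforce
qed

lemma affine_map_matching_four_points:
  assumes gp: "general_position p1 p2 p3 p4" "general_position q1 q2 q3 q4"
    and ratios: "area p1 p3 p4 * area q1 q2 q3 = area q1 q3 q4 * area p1 p2 p3"
      "area p1 p2 p4 * area q1 q2 q3 = area q1 q2 q4 * area p1 p2 p3"
  obtains a b c d e f where "a * d - b * c \<noteq> 0"
    "aff2 a b c d e f q1 = p1" "aff2 a b c d e f q2 = p2" "aff2 a b c d e f q3 = p3" "aff2 a b c d e f q4 = p4"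
proof -
  have E: "area p1 p2 p3 \<noteq> 0" "area q1 q2 q3 \<noteq> 0" using gp by (simp_all add: general_position_def)
  obtain a b c d e f where T: "aff2 a b c d e f q1 = p1" "aff2 a b c d e f q2 = p2" "aff2 a b c d e f q3 = p3"
    using aff2_through_three_points[OF E(2)] by metis
  let ?T = "aff2 a b c d e f"
  have scale: "area p1 p2 p3 = (a * d - b * c) * area q1 q2 q3"
    using area_aff2[of a b c d e f q1 q2 q3] T by simp
  then have "a * d - b * c \<noteq> 0" using E(1) by auto
  have "area p1 (?T q4) p3 = area p1 p4 p3" "area p1 p2 (?T q4) = area p1 p2 p4"
  proof -
    have "area p1 (?T q4) p3 * area q1 q2 q3 = area q1 q4 q3 * area p1 p2 p3"
      "area p1 p2 (?T q4) * area q1 q2 q3 = area q1 q2 q4 * area p1 p2 p3"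
      using area_aff2[of a b c d e f q1 q4 q3] area_aff2[of a b c d e f q1 q2 q4] T scale by simp_all
    moreover have "area p1 p4 p3 * area q1 q2 q3 = area q1 q4 q3 * area p1 p2 p3"
      using ratios(1) by (simp add: area_def algebra_simps)
    ultimately show "area p1 (?T q4) p3 = area p1 p4 p3" "area p1 p2 (?T q4) = area p1 p2 p4"
      using ratios(2) E(2) by (metis mult_right_cancel)+
  qed
  then have "?T q4 = p4" using area_cancel[OF E(1)] by blast
  with T \<open>a * d - b * c \<noteq> 0\<close> show ?thesis using that by blast
qed

lemma det_ratio_eq:
  fixes B B' E E' X Y :: complex
  assumes "B * X = E * Y" "B' * X = E' * Y" "X \<noteq> 0"
  shows "B * E' = B' * E"
proof -
  have "(B * E' - B' * E) * X = 0" using assms(1,2) by algebra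
  with assms(3) show ?thesis by simp
qed

lemma twinI:
  assumes "finite (Sing v)" "Sing u = Sing v" "u \<noteq> v"
    and "\<And>p. p \<in> Sing v \<Longrightarrow> trD u p = trD v p \<and> detD u p = detD v p"
  shows "twin v u"
  unfolding twin_def isolated_sings_def using assms islimpt_finite[OF assms(1)] by auto

lemma spectra_eq_obtain_bij:
  assumes "finite (Sing v)" "finite (Sing w)" "spectra v = spectra w"
  obtains h where "bij_betw h (Sing w) (Sing v)"
    "\<And>q. q \<in> Sing w \<Longrightarrow> trD v (h q) = trD w q \<and> detD v (h q) = detD w q"
proof -
  have "image_mset (\<lambda>q. (trD w q, detD w q)) (mset_set (Sing w)) =
      image_mset (\<lambda>p. (trD v p, detD v p)) (mset_set (Sing v))"
    using assms(3) by (simp add: spectra_def)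
  then obtain h where "bij_betw h (Sing w) (Sing v)"
    and "\<And>q. q \<in> Sing w \<Longrightarrow> (trD v (h q), detD v (h q)) = (trD w q, detD w q)"
    using image_mset_eq_obtain_bij[OF assms(2,1)] by blast
  then show ?thesis using that by simp
qed

lemma area_ratios_of_equal_dets:
  assumes gp: "general_position p1 p2 p3 p4" "general_position q1 q2 q3 q4"
    and sing: "{p1, p2, p3, p4} \<subseteq> Sing v" "{q1, q2, q3, q4} \<subseteq> Sing w"
    and det: "detD v p2 = detD w q2" "detD v p3 = detD w q3" "detD v p4 = detD w q4"
    and nonzero: "detD v p2 \<noteq> 0" "detD v p3 \<noteq> 0"
  shows "area p1 p3 p4 * area q1 q2 q3 = area q1 q3 q4 * area p1 p2 p3"
    and "area p1 p2 p4 * area q1 q2 q3 = area q1 q2 q4 * area p1 p2 p3"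
proof -
  note rel_v = detD_area_relations[OF gp(1) sing(1)] and rel_w = detD_area_relations[OF gp(2) sing(2)]
  show "area p1 p3 p4 * area q1 q2 q3 = area q1 q3 q4 * area p1 p2 p3"
    using det_ratio_eq[OF rel_v(1) rel_w(1)[folded det] nonzero(1)] .
  have "area p1 p2 p4 * - area q1 q2 q3 = area q1 q2 q4 * - area p1 p2 p3"
    using det_ratio_eq[OF rel_v(2) rel_w(2)[folded det] nonzero(2)] .
  then show "area p1 p2 p4 * area q1 q2 q3 = area q1 q2 q4 * area p1 p2 p3" by simp
qed

lemma same_spectra_imp_affine_equivalent_or_twin:
  assumes v: "finite (Sing v)" "card (Sing v) = 4" "\<forall>p\<in>Sing v. detD v p \<noteq> 0"
    and w: "finite (Sing w)" "card (Sing w) = 4" "\<forall>p\<in>Sing w. detD w p \<noteq> 0"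
    and spectra: "spectra v = spectra w"
  shows "\<exists>a b c d e f. a * d - b * c \<noteq> 0 \<and> (\<exists>u. vf u = pushfwd a b c d e f w \<and> (u = v \<or> twin v u))"
proof -
  obtain q1 q2 q3 q4 where Q: "Sing w = {q1, q2, q3, q4}" "distinct [q1, q2, q3, q4]"
    using card_eq_4_obtain[OF w(2)] .
  obtain h where h: "bij_betw h (Sing w) (Sing v)"
    and spec: "\<And>q. q \<in> Sing w \<Longrightarrow> trD v (h q) = trD w q \<and> detD v (h q) = detD w q"
    using spectra_eq_obtain_bij[OF v(1) w(1) spectra] by blast
  define p1 p2 p3 p4 where "p1 = h q1" and "p2 = h q2" and "p3 = h q3" and "p4 = h q4"
  have P: "Sing v = {p1, p2, p3, p4}" "distinct [p1, p2, p3, p4]"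
    using Q h by (auto simp: p1_def p2_def p3_def p4_def bij_betw_def distinct_map[of h "[q1, q2, q3, q4]", simplified])
  have gp: "general_position p1 p2 p3 p4" "general_position q1 q2 q3 q4"
    using finite_Sing_general_position[OF v(1) P(2)] finite_Sing_general_position[OF w(1) Q(2)] P(1) Q(1)
    by simp_all
  have "detD v p2 = detD w q2" "detD v p3 = detD w q3" "detD v p4 = detD w q4"
    using spec Q by (simp_all add: p2_def p3_def p4_def)
  moreover have "detD v p2 \<noteq> 0" "detD v p3 \<noteq> 0" using v(3) P by auto
  ultimately have ratios: "area p1 p3 p4 * area q1 q2 q3 = area q1 q3 q4 * area p1 p2 p3"
    "area p1 p2 p4 * area q1 q2 q3 = area q1 q2 q4 * area p1 p2 p3"
    using area_ratios_of_equal_dets[OF gp, of v w] P Q by simp_all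
  obtain a b c d e f where T: "a * d - b * c \<noteq> 0"
    "aff2 a b c d e f q1 = p1" "aff2 a b c d e f q2 = p2" "aff2 a b c d e f q3 = p3" "aff2 a b c d e f q4 = p4"
    using affine_map_matching_four_points[OF gp ratios] .
  obtain u where u: "vf u = pushfwd a b c d e f w" "Sing u = aff2 a b c d e f ` Sing w"
    "\<And>z. trD u (aff2 a b c d e f z) = trD w z" "\<And>z. detD u (aff2 a b c d e f z) = detD w z"
    using pushfwd_field[OF T(1), of e f w] by metis
  have "aff2 a b c d e f q = h q" if "q \<in> Sing w" for q
    using that T Q by (auto simp: p1_def p2_def p3_def p4_def)
  then have "trD u (h q) = trD v (h q) \<and> detD u (h q) = detD v (h q)" if "q \<in> Sing w" for q
    using u(3,4)[of q] spec[OF that] that by simp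
  then have "\<forall>p\<in>Sing v. trD u p = trD v p \<and> detD u p = detD v p"
    unfolding bij_betw_imp_surj_on[OF h, symmetric] by blast
  moreover have "Sing u = Sing v" using u(2) T P Q by simp
  ultimately have "u = v \<or> twin v u" using twinI[OF v(1)] by blast
  with T(1) u(1) show ?thesis by blast
qed

section \<open>Resultants and four singular points\<close>

lemma common_root_imp_resultant_zero:
  fixes a b c a' b' c' y :: complex
  assumes P: "a * y\<^sup>2 + b * y + c = 0" and Q: "a' * y\<^sup>2 + b' * y + c' = 0"
  shows "(a * c' - a' * c)\<^sup>2 - (a * b' - a' * b) * (b * c' - b' * c) = 0"
proof -
  define A B C where "A = a * c' - a' * c" and "B = a * b' - a' * b" and "C = b * c' - b' * c"
  have L: "B * y + A = 0" and M: "A * y\<^sup>2 + C * y = 0"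
    using P Q unfolding A_def B_def C_def by algebra+
  show ?thesis unfolding A_def [symmetric] B_def [symmetric] C_def [symmetric]
  proof (cases "B = 0")
    case True
    then show "A\<^sup>2 - B * C = 0" using L by simp
  next
    case False
    then have y: "y = - A / B" using L by (simp add: field_simps add_eq_0_iff)
    have "A * (A\<^sup>2 - B * C) = 0"
      using M False unfolding y by (simp add: field_simps power2_eq_square)
    moreover have "A\<^sup>2 - B * C = 0" if "A = 0"
    proof -
      have "c = 0" "c' = 0" using that y P Q by simp_all
      then show ?thesis by (simp add: A_def B_def C_def)
    qed
    ultimately show "A\<^sup>2 - B * C = 0" by auto
  qed
qed

lemma quadratic_has_root:
  fixes a b c :: complex
  assumes "a \<noteq> 0"
  shows "\<exists>y. a * y\<^sup>2 + b * y + c = 0"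
proof -
  define y where "y = (- b + csqrt (b\<^sup>2 - 4 * a * c)) / (2 * a)"
  have "a * y\<^sup>2 + b * y + c = ((csqrt (b\<^sup>2 - 4 * a * c))\<^sup>2 - (b\<^sup>2 - 4 * a * c)) / (4 * a)"
    unfolding y_def using assms by (simp add: field_simps power2_eq_square)
  then show ?thesis by auto
qed

lemma resultant_zero_imp_common_root:
  fixes a b c a' b' c' :: complex
  assumes a: "a \<noteq> 0" and R: "(a * c' - a' * c)\<^sup>2 - (a * b' - a' * b) * (b * c' - b' * c) = 0"
  shows "\<exists>y. a * y\<^sup>2 + b * y + c = 0 \<and> a' * y\<^sup>2 + b' * y + c' = 0"
proof -
  define A B C where "A = a * c' - a' * c" and "B = a * b' - a' * b" and "C = b * c' - b' * c"
  have R': "A\<^sup>2 - B * C = 0" using R unfolding A_def B_def C_def .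
  have second: "a * (a' * y\<^sup>2 + b' * y + c') = a' * (a * y\<^sup>2 + b * y + c) + (B * y + A)" for y
    unfolding A_def B_def C_def by (simp add: algebra_simps)
  show ?thesis
  proof (cases "B = 0")
    case True
    then have "A = 0" using R' by simp
    obtain y where y: "a * y\<^sup>2 + b * y + c = 0" using quadratic_has_root[OF a] by blast
    then have "a * (a' * y\<^sup>2 + b' * y + c') = 0" using second[of y] \<open>A = 0\<close> True by simp
    then show ?thesis using y a by auto
  next
    case False
    define y where "y = - A / B"
    have L: "B * y + A = 0" unfolding y_def using False by simp
    have "a * A\<^sup>2 - b * A * B + c * B\<^sup>2 = a * (A\<^sup>2 - B * C)"
      unfolding A_def B_def C_def by (simp add: algebra_simps power2_eq_square)
    moreover have "a * y\<^sup>2 + b * y + c = (a * A\<^sup>2 - b * A * B + c * B\<^sup>2) / B\<^sup>2"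
      unfolding y_def using False by (simp add: field_simps power2_eq_square)
    ultimately have "a * y\<^sup>2 + b * y + c = a * (A\<^sup>2 - B * C) / B\<^sup>2" by simp
    then have P: "a * y\<^sup>2 + b * y + c = 0" unfolding R' by simp
    have "a * (a' * y\<^sup>2 + b' * y + c') = 0" using second[of y] P L by simp
    then show ?thesis using P a by auto
  qed
qed

definition disc4 :: "complex \<Rightarrow> complex \<Rightarrow> complex \<Rightarrow> complex \<Rightarrow> complex \<Rightarrow> complex" where
  "disc4 a b c d e = 256*a^3*e^3 - 192*a^2*b*d*e^2 - 128*a^2*c^2*e^2 + 144*a^2*c*d^2*e - 27*a^2*d^4
      + 144*a*b^2*c*e^2 - 6*a*b^2*d^2*e - 80*a*b*c^2*d*e + 18*a*b*c*d^3 + 16*a*c^4*e - 4*a*c^3*d^2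
      - 27*b^4*e^2 + 18*b^3*c*d*e - 4*b^3*d^3 - 4*b^2*c^3*e + b^2*c^2*d^2"

lemma disc4_double_root:
  assumes "e + d * r + c * r^2 + b * r^3 + a * r^4 = 0" "d + 2 * c * r + 3 * b * r^2 + 4 * a * r^3 = 0"
  shows "disc4 a b c d e = 0"
proof -
  have d: "d = - (2 * c * r + 3 * b * r^2 + 4 * a * r^3)" using assms(2) by (simp add: algebra_simps add_eq_0_iff)
  have e: "e = 3 * a * r^4 + 2 * b * r^3 + c * r^2" using assms(1) unfolding d by (simp add: algebra_simps add_eq_0_iff power_def)
  show ?thesis unfolding disc4_def d e by (simp add: algebra_simps power_def)
qed

lemma card_roots_quartic:
  assumes "a \<noteq> 0" "disc4 a b c d e \<noteq> 0"
  shows "card {x. poly [:e, d, c, b, a:] x = 0} = 4"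
proof -
  let ?p = "[:e, d, c, b, a:]"
  have "rsquarefree ?p"
    unfolding rsquarefree_roots
  proof (intro allI notI)
    fix r assume r: "poly ?p r = 0 \<and> poly (pderiv ?p) r = 0"
    have "e + d * r + c * r^2 + b * r^3 + a * r^4 = 0"
      using r by (simp add: algebra_simps power_def)
    moreover have "d + 2 * c * r + 3 * b * r^2 + 4 * a * r^3 = 0"
      using r by (simp add: pderiv_pCons algebra_simps power_def)
    ultimately show False using disc4_double_root assms(2) by blast
  qed
  have deg: "degree ?p = 4" using assms(1) by simp
  have "degree ?p = degree (smult (lead_coeff ?p) (\<Prod>z | poly ?p z = 0. [:- z, 1:]))"
    using complex_poly_decompose_rsquarefree[OF \<open>rsquarefree ?p\<close>] by simp
  also have "\<dots> = degree (\<Prod>z | poly ?p z = 0. [:- z, 1:])"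
    using assms(1) by simp
  also have "\<dots> = card {x. poly ?p x = 0}"
    by (subst degree_prod_sum_eq) simp_all
  finally show ?thesis using deg by simp
qed

lemma quartic_coeffs:
  fixes p :: "'a::zero poly"
  assumes "degree p \<le> 4"
  shows "p = [:coeff p 0, coeff p 1, coeff p 2, coeff p 3, coeff p 4:]"
proof (rule poly_eqI)
  fix n
  show "coeff p n = coeff [:coeff p 0, coeff p 1, coeff p 2, coeff p 3, coeff p 4:] n"
    using assms by (cases n; cases "n - 1"; cases "n - 2"; cases "n - 3"; cases "n - 4")
      (auto simp: coeff_eq_0 numeral_eq_Suc)
qed

definition quartic_disc :: "complex poly \<Rightarrow> complex" where
  "quartic_disc p = disc4 (coeff p 4) (coeff p 3) (coeff p 2) (coeff p 1) (coeff p 0)"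

lemma card_roots_quartic_poly:
  assumes "degree p = 4" "quartic_disc p \<noteq> 0"
  shows "card {x. poly p x = 0} = 4"
proof -
  have "coeff p 4 \<noteq> 0" using assms(1) leading_coeff_0_iff[of p] by auto
  then have "card {x. poly [:coeff p 0, coeff p 1, coeff p 2, coeff p 3, coeff p 4:] x = 0} = 4"
    using card_roots_quartic assms(2) unfolding quartic_disc_def by blast
  then show ?thesis using quartic_coeffs[of p] assms(1) by (metis order.refl)
qed

lemma qeval_as_y_quadratic:
  "qeval c (x, y) = cyy c * y\<^sup>2 + (cy c + cxy c * x) * y + (cst c + cx c * x + cxx c * x\<^sup>2)"
  by (simp add: qeval_def algebra_simps)

text \<open>The resultant of \<open>qeval c\<close> and \<open>qeval d\<close> as quadratics in \<open>y\<close>; a quartic in \<open>x\<close>.\<close>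

definition y_resultant :: "quad \<Rightarrow> quad \<Rightarrow> complex poly" where
  "y_resultant c d =
    (let A0 = cyy c * cst d - cyy d * cst c; A1 = cyy c * cx d - cyy d * cx c; A2 = cyy c * cxx d - cyy d * cxx c;
         B0 = cyy c * cy d - cyy d * cy c; B1 = cyy c * cxy d - cyy d * cxy c;
         C0 = cy c * cst d - cy d * cst c; C1 = cy c * cx d + cxy c * cst d - cy d * cx c - cxy d * cst c;
         C2 = cy c * cxx d + cxy c * cx d - cy d * cxx c - cxy d * cx c; C3 = cxy c * cxx d - cxy d * cxx c
     in [:A0\<^sup>2 - B0 * C0, 2 * A0 * A1 - B0 * C1 - B1 * C0, A1\<^sup>2 + 2 * A0 * A2 - B0 * C2 - B1 * C1,
          2 * A1 * A2 - B0 * C3 - B1 * C2, A2\<^sup>2 - B1 * C3:])"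

lemma degree_y_resultant: "degree (y_resultant c d) \<le> 4"
  by (simp add: y_resultant_def Let_def numeral_eq_Suc)

lemma poly_y_resultant:
  "poly (y_resultant c d) x =
     (cyy c * (cst d + cx d * x + cxx d * x\<^sup>2) - cyy d * (cst c + cx c * x + cxx c * x\<^sup>2))\<^sup>2
     - (cyy c * (cy d + cxy d * x) - cyy d * (cy c + cxy c * x))
       * ((cy c + cxy c * x) * (cst d + cx d * x + cxx d * x\<^sup>2) - (cy d + cxy d * x) * (cst c + cx c * x + cxx c * x\<^sup>2))"
  by (simp add: y_resultant_def Let_def algebra_simps power2_eq_square)

lemma common_zero_imp_y_resultant_root:
  "qeval c (x, y) = 0 \<Longrightarrow> qeval d (x, y) = 0 \<Longrightarrow> poly (y_resultant c d) x = 0"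
  unfolding poly_y_resultant qeval_as_y_quadratic by (rule common_root_imp_resultant_zero)

lemma y_resultant_root_imp_common_zero:
  "cyy c \<noteq> 0 \<Longrightarrow> poly (y_resultant c d) x = 0 \<Longrightarrow> \<exists>y. qeval c (x, y) = 0 \<and> qeval d (x, y) = 0"
  unfolding poly_y_resultant qeval_as_y_quadratic by (rule resultant_zero_imp_common_root)

lemma four_singular_points:
  assumes "cyy (Pquad v) \<noteq> 0" "coeff (y_resultant (Pquad v) (Qquad v)) 4 \<noteq> 0"
    "quartic_disc (y_resultant (Pquad v) (Qquad v)) \<noteq> 0"
  shows "finite (Sing v)" "\<exists>p1 p2 p3 p4. distinct [p1, p2, p3, p4] \<and> {p1, p2, p3, p4} \<subseteq> Sing v"
proof -
  let ?R = "y_resultant (Pquad v) (Qquad v)"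
  define X where "X = {x. poly ?R x = 0}"
  have "degree ?R = 4" using assms(2) degree_y_resultant le_degree by (metis antisym)
  then have "card X = 4" using card_roots_quartic_poly assms(3) by (simp add: X_def)
  then have "finite X" by (metis card.infinite zero_neq_numeral)
  define Y where "Y x = {y. qeval (Pquad v) (x, y) = 0}" for x
  have "finite (Y x)" for x
  proof -
    have "Y x = {y. poly [:cst (Pquad v) + cx (Pquad v) * x + cxx (Pquad v) * x\<^sup>2, cy (Pquad v) + cxy (Pquad v) * x, cyy (Pquad v):] y = 0}"
      by (simp add: Y_def qeval_as_y_quadratic algebra_simps power2_eq_square)
    moreover have "[:cst (Pquad v) + cx (Pquad v) * x + cxx (Pquad v) * x\<^sup>2, cy (Pquad v) + cxy (Pquad v) * x, cyy (Pquad v):] \<noteq> 0"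
      using assms(1) by simp
    ultimately show ?thesis by (metis poly_roots_finite)
  qed
  have "Sing v \<subseteq> Sigma X Y"
    using common_zero_imp_y_resultant_root by (auto simp: Sing_quads X_def Y_def)
  with \<open>finite X\<close> \<open>finite (Y _)\<close> show "finite (Sing v)" by (meson finite_SigmaI finite_subset)
  obtain x1 x2 x3 x4 where X: "X = {x1, x2, x3, x4}" "distinct [x1, x2, x3, x4]"
    using card_eq_4_obtain[OF \<open>card X = 4\<close>] .
  have "\<exists>y. (x, y) \<in> Sing v" if "x \<in> X" for x
    using y_resultant_root_imp_common_zero[OF assms(1)] that by (simp add: X_def Sing_quads)
  then obtain y1 y2 y3 y4 where "(x1, y1) \<in> Sing v" "(x2, y2) \<in> Sing v" "(x3, y3) \<in> Sing v" "(x4, y4) \<in> Sing v"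
    using X(1) by (metis insertI1 insert_commute)
  with X(2) show "\<exists>p1 p2 p3 p4. distinct [p1, p2, p3, p4] \<and> {p1, p2, p3, p4} \<subseteq> Sing v"
    by (intro exI[of _ "(x1, y1)"] exI[of _ "(x2, y2)"] exI[of _ "(x3, y3)"] exI[of _ "(x4, y4)"]) auto
qed

section \<open>The twin field\<close>

fun det3 :: "lin \<Rightarrow> lin \<Rightarrow> lin \<Rightarrow> complex" where
  "det3 (a0, a1, a2) (b0, b1, b2) (c0, c1, c2) =
     a0 * (b1 * c2 - b2 * c1) - b0 * (a1 * c2 - a2 * c1) + c0 * (a1 * b2 - a2 * b1)"

lemma cofactor_expansion:
  "det3 B C D * lev A z - det3 A C D * lev B z + det3 A B D * lev C z - det3 A B C * lev D z = 0"
  by (cases A; cases B; cases C; cases D) (simp add: algebra_simps)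

lemma lev_kernel:
  assumes "det3 A B C \<noteq> 0" "area p1 p2 p3 \<noteq> 0"
    and vanish: "\<And>p. p \<in> {p1, p2, p3} \<Longrightarrow> k1 * lev A p + k2 * lev B p + k3 * lev C p + k4 * lev D p = 0"
  shows "\<exists>t. k1 = t * det3 B C D \<and> k2 = - t * det3 A C D \<and> k3 = t * det3 A B D \<and> k4 = - t * det3 A B C"
proof -
  obtain a0 a1 a2 b0 b1 b2 c0 c1 c2 d0 d1 d2 where
    ABCD: "A = (a0, a1, a2)" "B = (b0, b1, b2)" "C = (c0, c1, c2)" "D = (d0, d1, d2)"
    by (metis prod_cases3)
  let ?L = "(k1 * a0 + k2 * b0 + k3 * c0 + k4 * d0, k1 * a1 + k2 * b1 + k3 * c1 + k4 * d1,
             k1 * a2 + k2 * b2 + k3 * c2 + k4 * d2)"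
  have "lev ?L p = k1 * lev A p + k2 * lev B p + k3 * lev C p + k4 * lev D p" for p
    by (simp add: ABCD algebra_simps)
  then have "lev ?L p1 = 0" "lev ?L p2 = 0" "lev ?L p3 = 0" using vanish by simp_all
  then have "?L = (0, 0, 0)" by (rule lev_zero_if_vanishes_at_triangle[OF assms(2)])
  then have "k1 * a0 + k2 * b0 + k3 * c0 + k4 * d0 = 0" "k1 * a1 + k2 * b1 + k3 * c1 + k4 * d1 = 0"
    "k1 * a2 + k2 * b2 + k3 * c2 + k4 * d2 = 0" by simp_all
  then have "det3 A B C * k1 = - k4 * det3 B C D" "det3 A B C * k2 = k4 * det3 A C D"
    "det3 A B C * k3 = - k4 * det3 A B D"
    unfolding ABCD det3.simps by algebra+
  with assms(1) show ?thesis
    by (intro exI[of _ "- k4 / det3 A B C"]) (simp add: field_simps)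
qed

definition dx_lin :: "quad \<Rightarrow> lin" where
  "dx_lin c = (cx c, 2 * cxx c, cxy c)"

definition dy_lin :: "quad \<Rightarrow> lin" where
  "dy_lin c = (cy c, cxy c, 2 * cyy c)"

lemma qdx_lev: "qdx c z = lev (dx_lin c) z"
  and qdy_lev: "qdy c z = lev (dy_lin c) z"
  by (simp_all add: qdx_def qdy_def dx_lin_def dy_lin_def)

text \<open>The trace of \<open>mix_field (1 + k1) k2 k3 (1 + k4) v\<close> exceeds that of \<open>v\<close>
  by the affine function \<open>k1 qdx P + k2 qdx Q + k3 qdy P + k4 qdy Q\<close>; the cofactors below span
  the \<open>(k1, k2, k3, k4)\<close> for which it vanishes identically.\<close>

definition trace_kernel :: "qvf \<Rightarrow> complex \<times> complex \<times> complex \<times> complex" where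
  "trace_kernel v =
     (let A = dx_lin (Pquad v); B = dx_lin (Qquad v); C = dy_lin (Pquad v); D = dy_lin (Qquad v)
      in (det3 B C D, - det3 A C D, det3 A B D, - det3 A B C))"

lemma trace_kernel_annihilates:
  assumes "trace_kernel v = (N1, N2, N3, N4)"
  shows "N1 * qdx (Pquad v) z + N2 * qdx (Qquad v) z + N3 * qdy (Pquad v) z + N4 * qdy (Qquad v) z = 0"
  using assms cofactor_expansion[of "dx_lin (Qquad v)" "dy_lin (Pquad v)" "dy_lin (Qquad v)" "dx_lin (Pquad v)" z]
  by (auto simp: trace_kernel_def Let_def qdx_lev qdy_lev algebra_simps)

text \<open>\<open>s\<close> is the nonzero root of \<open>det (I + s N) = 1 + s (N1 + N4) + s\<^sup>2 (N1 N4 - N2 N3) = 1\<close>.\<close>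

definition twin_field :: "qvf \<Rightarrow> qvf" where
  "twin_field v = (case trace_kernel v of (N1, N2, N3, N4) \<Rightarrow>
     let s = - (N1 + N4) / (N1 * N4 - N2 * N3) in mix_field (1 + s * N1) (s * N2) (s * N3) (1 + s * N4) v)"

text \<open>The factors guarantee, in turn: four distinct singular points (a nonvanishing leading coefficient
  and discriminant of the \<open>y\<close>-resultant); that \<open>Pquad v\<close> and \<open>Qquad v\<close> span the pencil through them; and
  that \<open>twin_field v\<close> is well defined and differs from \<open>v\<close>.\<close>

definition genericity :: "qvf \<Rightarrow> complex" where
  "genericity v = (case trace_kernel v of (N1, N2, N3, N4) \<Rightarrow>
     let P = Pquad v; Q = Qquad v; R = y_resultant P Q
     in cyy P * coeff R 4 * quartic_disc R * (cxx P * cyy Q - cyy P * cxx Q) * N4 * (N1 + N4) * (N1 * N4 - N2 * N3))"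

lemma genericity_nonzeroD:
  assumes "genericity v \<noteq> 0" "trace_kernel v = (N1, N2, N3, N4)"
  shows "cyy (Pquad v) \<noteq> 0" "coeff (y_resultant (Pquad v) (Qquad v)) 4 \<noteq> 0"
    "quartic_disc (y_resultant (Pquad v) (Qquad v)) \<noteq> 0"
    "cxx (Pquad v) * cyy (Qquad v) - cyy (Pquad v) * cxx (Qquad v) \<noteq> 0"
    "N4 \<noteq> 0" "N1 + N4 \<noteq> 0" "N1 * N4 - N2 * N3 \<noteq> 0"
proof -
  have "genericity v = cyy (Pquad v) * coeff (y_resultant (Pquad v) (Qquad v)) 4 * quartic_disc (y_resultant (Pquad v) (Qquad v))
      * (cxx (Pquad v) * cyy (Qquad v) - cyy (Pquad v) * cxx (Qquad v)) * N4 * (N1 + N4) * (N1 * N4 - N2 * N3)"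
    by (simp only: genericity_def assms(2) Let_def prod.case)
  with assms(1) show "cyy (Pquad v) \<noteq> 0" "coeff (y_resultant (Pquad v) (Qquad v)) 4 \<noteq> 0"
    "quartic_disc (y_resultant (Pquad v) (Qquad v)) \<noteq> 0"
    "cxx (Pquad v) * cyy (Qquad v) - cyy (Pquad v) * cxx (Qquad v) \<noteq> 0"
    "N4 \<noteq> 0" "N1 + N4 \<noteq> 0" "N1 * N4 - N2 * N3 \<noteq> 0"
    by (auto simp only: mult_eq_0_iff)
qed

lemma generic_pencil:
  assumes "genericity v \<noteq> 0"
  obtains p1 p2 p3 p4 a b a' b' where "finite (Sing v)" "general_position p1 p2 p3 p4"
    "{p1, p2, p3, p4} \<subseteq> Sing v"
    "Pquad v = qcomb a (line_pair p1 p2 p3 p4) b (line_pair p1 p3 p2 p4)"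
    "Qquad v = qcomb a' (line_pair p1 p2 p3 p4) b' (line_pair p1 p3 p2 p4)"
    "a * b' - b * a' \<noteq> 0"
proof -
  obtain N1 N2 N3 N4 where N: "trace_kernel v = (N1, N2, N3, N4)" using prod_cases4 by blast
  note generic = genericity_nonzeroD[OF assms N]
  obtain p1 p2 p3 p4 where P: "distinct [p1, p2, p3, p4]" "{p1, p2, p3, p4} \<subseteq> Sing v"
    using four_singular_points(2)[OF generic(1-3)] by blast
  have fin: "finite (Sing v)" by (rule four_singular_points(1)[OF generic(1-3)])
  have gp: "general_position p1 p2 p3 p4" by (rule finite_Sing_general_position[OF fin P])
  obtain a b a' b' where ab:
    "Pquad v = qcomb a (line_pair p1 p2 p3 p4) b (line_pair p1 p3 p2 p4)"
    "Qquad v = qcomb a' (line_pair p1 p2 p3 p4) b' (line_pair p1 p3 p2 p4)"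
    using field_in_pencil[OF gp P(2)] .
  have "cxx (Pquad v) * cyy (Qquad v) - cyy (Pquad v) * cxx (Qquad v) =
      (a * b' - b * a') * (cxx (line_pair p1 p2 p3 p4) * cyy (line_pair p1 p3 p2 p4)
        - cyy (line_pair p1 p2 p3 p4) * cxx (line_pair p1 p3 p2 p4))"
    unfolding ab by (simp add: qcomb_def algebra_simps)
  with generic(4) have "a * b' - b * a' \<noteq> 0" by auto
  with fin gp P(2) ab show ?thesis by (rule that)
qed

lemma mix_field_id: "mix_field 1 0 0 1 v = v"
  by (rule qvf_eqI) (simp_all add: mix_field_def qcomb_def)

lemma twin_field_twin:
  assumes "genericity v \<noteq> 0"
  shows "twin v (twin_field v)"
proof -
  obtain N1 N2 N3 N4 where N: "trace_kernel v = (N1, N2, N3, N4)" using prod_cases4 by blast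
  note generic = genericity_nonzeroD[OF assms N]
  define s where "s = - (N1 + N4) / (N1 * N4 - N2 * N3)"
  have u: "twin_field v = mix_field (1 + s * N1) (s * N2) (s * N3) (1 + s * N4) v"
    by (simp add: twin_field_def N s_def)
  have s: "s * (N1 * N4 - N2 * N3) = - (N1 + N4)" using generic(7) by (simp add: s_def)
  have det: "(1 + s * N1) * (1 + s * N4) - s * N2 * (s * N3) = 1"
    using s by algebra
  have "s \<noteq> 0" using s generic(6) by auto
  have "finite (Sing v)" by (rule four_singular_points(1)[OF generic(1-3)])
  moreover have "Sing (twin_field v) = Sing v" using det by (simp add: u Sing_mix_field)
  moreover have "trD (twin_field v) p = trD v p" for p
  proof -
    have "trD (twin_field v) p = trD v p +
        s * (N1 * qdx (Pquad v) p + N2 * qdx (Qquad v) p + N3 * qdy (Pquad v) p + N4 * qdy (Qquad v) p)"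
      unfolding u trD_mix_field by (simp add: trD_quads algebra_simps)
    then show ?thesis using trace_kernel_annihilates[OF N] by simp
  qed
  moreover have "detD (twin_field v) p = detD v p" for p using det by (simp add: u detD_mix_field)
  moreover have "twin_field v \<noteq> v"
  proof
    assume "twin_field v = v"
    then have "cxx (Qquad (twin_field v)) = cxx (Qquad v)" "cyy (Qquad (twin_field v)) = cyy (Qquad v)" by simp_all
    then have "s * (N3 * cxx (Pquad v) + N4 * cxx (Qquad v)) = 0" "s * (N3 * cyy (Pquad v) + N4 * cyy (Qquad v)) = 0"
      by (simp_all add: u mix_field_def qcomb_def algebra_simps)
    with \<open>s \<noteq> 0\<close> have "N3 * cxx (Pquad v) + N4 * cxx (Qquad v) = 0" "N3 * cyy (Pquad v) + N4 * cyy (Qquad v) = 0"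
      by simp_all
    moreover have "N4 * (cxx (Pquad v) * cyy (Qquad v) - cyy (Pquad v) * cxx (Qquad v)) =
        cxx (Pquad v) * (N3 * cyy (Pquad v) + N4 * cyy (Qquad v)) - cyy (Pquad v) * (N3 * cxx (Pquad v) + N4 * cxx (Qquad v))"
      by (simp add: algebra_simps)
    ultimately have "N4 * (cxx (Pquad v) * cyy (Qquad v) - cyy (Pquad v) * cxx (Qquad v)) = 0" by simp
    with generic(4,5) show False by simp
  qed
  ultimately show ?thesis by (intro twinI) auto
qed

lemma qcomb_change_basis:
  assumes "a * b' - b * a' \<noteq> 0"
  obtains m n where "qcomb \<alpha> e \<beta> f = qcomb m (qcomb a e b f) n (qcomb a' e b' f)"
proof -
  define m n where "m = (\<alpha> * b' - \<beta> * a') / (a * b' - b * a')" and "n = (a * \<beta> - b * \<alpha>) / (a * b' - b * a')"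
  have "(\<alpha> * b' - \<beta> * a') * a + (a * \<beta> - b * \<alpha>) * a' = \<alpha> * (a * b' - b * a')"
    "(\<alpha> * b' - \<beta> * a') * b + (a * \<beta> - b * \<alpha>) * b' = \<beta> * (a * b' - b * a')"
    by algebra+
  then have "m * a + n * a' = \<alpha> * (a * b' - b * a') / (a * b' - b * a')"
    "m * b + n * b' = \<beta> * (a * b' - b * a') / (a * b' - b * a')"
    unfolding m_def n_def by (simp_all add: add_divide_distrib [symmetric])
  with assms have "m * a + n * a' = \<alpha>" "m * b + n * b' = \<beta>" by simp_all
  then have "qeval (qcomb \<alpha> e \<beta> f) z = qeval (qcomb m (qcomb a e b f) n (qcomb a' e b' f)) z" for z
    by (simp add: algebra_simps flip: \<open>m * a + n * a' = \<alpha>\<close> \<open>m * b + n * b' = \<beta>\<close>)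
  then show ?thesis by (intro that qeval_eqI)
qed

lemma twin_is_mix_field:
  assumes "genericity v \<noteq> 0" "twin v u"
  obtains m11 m12 m21 m22 where "u = mix_field m11 m12 m21 m22 v"
proof -
  obtain p1 p2 p3 p4 a b a' b' where gp: "general_position p1 p2 p3 p4" "{p1, p2, p3, p4} \<subseteq> Sing v"
    and v: "Pquad v = qcomb a (line_pair p1 p2 p3 p4) b (line_pair p1 p3 p2 p4)"
      "Qquad v = qcomb a' (line_pair p1 p2 p3 p4) b' (line_pair p1 p3 p2 p4)"
    and \<Delta>: "a * b' - b * a' \<noteq> 0"
    using generic_pencil[OF assms(1)] by metis
  have "{p1, p2, p3, p4} \<subseteq> Sing u" using assms(2) gp(2) by (simp add: twin_def)
  then obtain \<alpha> \<beta> \<alpha>' \<beta>' where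
    "Pquad u = qcomb \<alpha> (line_pair p1 p2 p3 p4) \<beta> (line_pair p1 p3 p2 p4)"
    "Qquad u = qcomb \<alpha>' (line_pair p1 p2 p3 p4) \<beta>' (line_pair p1 p3 p2 p4)"
    using field_in_pencil[OF gp(1)] by metis
  moreover obtain m11 m12 m21 m22 where
    "qcomb \<alpha> (line_pair p1 p2 p3 p4) \<beta> (line_pair p1 p3 p2 p4) = qcomb m11 (Pquad v) m12 (Qquad v)"
    "qcomb \<alpha>' (line_pair p1 p2 p3 p4) \<beta>' (line_pair p1 p3 p2 p4) = qcomb m21 (Pquad v) m22 (Qquad v)"
    unfolding v by (metis qcomb_change_basis[OF \<Delta>])
  ultimately have "u = mix_field m11 m12 m21 m22 v"
    by (intro qvf_eqI) (simp_all add: mix_field_def)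
  then show ?thesis by (rule that)
qed

lemma mix_field_trace_kernel:
  assumes N: "trace_kernel v = (N1, N2, N3, N4)" "N4 \<noteq> 0" and "area p1 p2 p3 \<noteq> 0"
    and tr: "\<And>p. p \<in> {p1, p2, p3} \<Longrightarrow> trD (mix_field m11 m12 m21 m22 v) p = trD v p"
  shows "\<exists>t. m11 = 1 + t * N1 \<and> m12 = t * N2 \<and> m21 = t * N3 \<and> m22 = 1 + t * N4"
proof -
  let ?A = "dx_lin (Pquad v)" and ?B = "dx_lin (Qquad v)" and ?C = "dy_lin (Pquad v)" and ?D = "dy_lin (Qquad v)"
  have N': "N1 = det3 ?B ?C ?D" "N2 = - det3 ?A ?C ?D" "N3 = det3 ?A ?B ?D" "N4 = - det3 ?A ?B ?C"
    using N(1) by (simp_all add: trace_kernel_def Let_def)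
  have "(m11 - 1) * lev ?A p + m12 * lev ?B p + m21 * lev ?C p + (m22 - 1) * lev ?D p = 0"
    if "p \<in> {p1, p2, p3}" for p
    using tr[OF that] unfolding trD_mix_field by (simp add: trD_quads qdx_lev qdy_lev algebra_simps)
  moreover have "det3 ?A ?B ?C \<noteq> 0" using N' N(2) by simp
  ultimately obtain t where "m11 - 1 = t * det3 ?B ?C ?D" "m12 = - t * det3 ?A ?C ?D"
      "m21 = t * det3 ?A ?B ?D" "m22 - 1 = - t * det3 ?A ?B ?C"
    using lev_kernel[of ?A ?B ?C p1 p2 p3] assms(3) by blast
  then show ?thesis unfolding N' by (intro exI[of _ t]) (simp add: algebra_simps)
qed

lemma twin_eq_twin_field:
  assumes "genericity v \<noteq> 0" "twin v u"
  shows "u = twin_field v"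
proof -
  obtain N1 N2 N3 N4 where N: "trace_kernel v = (N1, N2, N3, N4)" using prod_cases4 by blast
  note generic = genericity_nonzeroD[OF assms(1) N]
  obtain p1 p2 p3 p4 a b a' b' where gp: "general_position p1 p2 p3 p4" "{p1, p2, p3, p4} \<subseteq> Sing v"
    and v: "Pquad v = qcomb a (line_pair p1 p2 p3 p4) b (line_pair p1 p3 p2 p4)"
      "Qquad v = qcomb a' (line_pair p1 p2 p3 p4) b' (line_pair p1 p3 p2 p4)"
    and \<Delta>: "a * b' - b * a' \<noteq> 0"
    using generic_pencil[OF assms(1)] by metis
  obtain m11 m12 m21 m22 where u: "u = mix_field m11 m12 m21 m22 v"
    using twin_is_mix_field[OF assms] .
  have twin: "u \<noteq> v" "\<And>p. p \<in> Sing v \<Longrightarrow> trD u p = trD v p \<and> detD u p = detD v p"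
    using assms(2) by (auto simp: twin_def)
  have "area p1 p2 p3 \<noteq> 0" using gp(1) by (simp add: general_position_def)
  moreover have "trD (mix_field m11 m12 m21 m22 v) p = trD v p" if "p \<in> {p1, p2, p3}" for p
  proof -
    have "p \<in> Sing v" using gp(2) that by blast
    then show ?thesis using twin(2)[of p] by (simp add: u)
  qed
  ultimately have "\<exists>t. m11 = 1 + t * N1 \<and> m12 = t * N2 \<and> m21 = t * N3 \<and> m22 = 1 + t * N4"
    by (rule mix_field_trace_kernel[OF N generic(5)])
  then obtain t where t: "m11 = 1 + t * N1" "m12 = t * N2" "m21 = t * N3" "m22 = 1 + t * N4"
    by blast
  have "detD v p1 = (a * b' - b * a') * (area p1 p3 p4 * area p1 p2 p4 * area p1 p2 p3)"
    by (simp add: detD_quads v jac_qcomb jac_line_pairs)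
  then have "detD v p1 \<noteq> 0" using \<Delta> gp(1) by (simp add: general_position_def)
  moreover have "detD u p1 = detD v p1" using twin(2)[of p1] gp(2) by simp
  ultimately have "m11 * m22 - m12 * m21 = 1" by (simp add: u detD_mix_field)
  then have "t * ((N1 + N4) + t * (N1 * N4 - N2 * N3)) = 0" unfolding t by algebra
  moreover have "t \<noteq> 0"
    using twin(1) by (auto simp: u t mix_field_id)
  ultimately have "(N1 + N4) + t * (N1 * N4 - N2 * N3) = 0" by (metis mult_eq_0_iff)
  then have "t * (N1 * N4 - N2 * N3) = - (N1 + N4)" by (metis add.commute eq_neg_iff_add_eq_0)
  then have "t = - (N1 + N4) / (N1 * N4 - N2 * N3)" using generic(7) by (simp add: eq_divide_eq)
  then show ?thesis by (simp add: twin_field_def N u t)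
qed

section \<open>Genericity is Zariski open\<close>

lemma poly_fun_diff: "f \<in> poly_fun \<Longrightarrow> g \<in> poly_fun \<Longrightarrow> (\<lambda>v. f v - g v) \<in> poly_fun"
  using pf_add[of f "\<lambda>v. - 1 * g v"] pf_mult[OF pf_const[of "- 1"], of g] by simp

lemma poly_fun_uminus: "f \<in> poly_fun \<Longrightarrow> (\<lambda>v. - f v) \<in> poly_fun"
  using poly_fun_diff[OF pf_const[of 0]] by simp

lemma poly_fun_power: "f \<in> poly_fun \<Longrightarrow> (\<lambda>v. f v ^ n) \<in> poly_fun"
  by (induction n) (simp_all add: pf_const pf_mult)

lemmas poly_fun_intros = pf_const pf_coord pf_add pf_mult poly_fun_diff poly_fun_uminus poly_fun_power

lemma genericity_poly_fun: "genericity \<in> poly_fun"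
  unfolding genericity_def [abs_def] trace_kernel_def y_resultant_def quartic_disc_def disc4_def
    dx_lin_def dy_lin_def Pquad_def Qquad_def Let_def
  by (simp add: numeral_eq_Suc) (intro poly_fun_intros)

lemma genericity_example: "genericity (mk_qvf (Quad 0 (- 1) 0 0 0 2) (Quad 0 0 1 2 0 0)) \<noteq> 0"
  by (simp add: genericity_def trace_kernel_def y_resultant_def quartic_disc_def disc4_def
      dx_lin_def dy_lin_def Let_def numeral_eq_Suc)

theorem theorem1p3:
  shows "(\<forall>v w :: qvf.
            finite (Sing v) \<and> card (Sing v) = 4 \<and> (\<forall>p\<in>Sing v. detD v p \<noteq> 0) \<and>
            finite (Sing w) \<and> card (Sing w) = 4 \<and> (\<forall>p\<in>Sing w. detD w p \<noteq> 0) \<and>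
            spectra v = spectra w \<longrightarrow>
            (\<exists>a b c d e f. a * d - b * c \<noteq> 0 \<and>
               (\<exists>u :: qvf. vf u = pushfwd a b c d e f w \<and> (u = v \<or> twin v u))))
         \<and> (\<exists>U :: qvf set. zariski_open U \<and> U \<noteq> {} \<and> (\<forall>v\<in>U. \<exists>!u. twin v u))"
proof (intro conjI allI impI)
  fix v w :: qvf
  assume "finite (Sing v) \<and> card (Sing v) = 4 \<and> (\<forall>p\<in>Sing v. detD v p \<noteq> 0) \<and>
    finite (Sing w) \<and> card (Sing w) = 4 \<and> (\<forall>p\<in>Sing w. detD w p \<noteq> 0) \<and> spectra v = spectra w"
  then show "\<exists>a b c d e f. a * d - b * c \<noteq> 0 \<and> (\<exists>u. vf u = pushfwd a b c d e f w \<and> (u = v \<or> twin v u))"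
    using same_spectra_imp_affine_equivalent_or_twin by blast
next
  let ?U = "{v. genericity v \<noteq> 0}"
  have "zariski_open ?U"
    unfolding zariski_open_def using genericity_poly_fun by (intro exI[of _ "{genericity}"]) auto
  moreover have "?U \<noteq> {}" using genericity_example by blast
  moreover have "\<forall>v\<in>?U. \<exists>!u. twin v u" using twin_field_twin twin_eq_twin_field by blast
  ultimately show "\<exists>U. zariski_open U \<and> U \<noteq> {} \<and> (\<forall>v\<in>U. \<exists>!u. twin v u)" by blast
qed

end
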